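(* Let $X$ be a metric space with bounded geometry. The set of ghost operators in the uniform quasi-local algebra $C^*_{uq}(X)$ is a two-sided closed ideal of $C^*_{uq}(X)$.
   Context: Bounded geometry: $\sup_x|B(x,R)|<\infty$ for all $R>0$. For $T\in\mathfrak B(\ell^2(X))$, $T_{x,y}=\langle T\delta_y,\delta_x\rangle$. $T$ is a ghost operator if for every $\varepsilon>0$ there is a bounded $B\subseteq X$ with $|T_{x,y}|<\varepsilon$ for all $x,y\in X\setminus B$. $T$ is quasi-local if for every $\varepsilon>0$ there is $R>0$ such that $\|\chi_AT\chi_B\|\leq\varepsilon$ for all $A,B\subseteq X$ with $d(A,B)\geq R$ ($\chi_A$ = multiplication by the characteristic function). $C^*_{uq}(X)$ is the $C^*$-algebra of all quasi-local operators on $\ell^2(X)$. *)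

theory Defs
  imports "HOL-Analysis.Analysis"
begin

definition l2 :: "('a \<Rightarrow> complex) set" where
  "l2 = {f. (\<lambda>x. (cmod (f x))\<^sup>2) summable_on UNIV}"

definition l2_norm :: "('a \<Rightarrow> complex) \<Rightarrow> real" where
  "l2_norm f = sqrt (infsum (\<lambda>x. (cmod (f x))\<^sup>2) UNIV)"

text \<open>Operators are maps on functions; only their action on l2 matters.\<close>

type_synonym 'a op = "('a \<Rightarrow> complex) \<Rightarrow> ('a \<Rightarrow> complex)"

definition bounded_op :: "'a op \<Rightarrow> bool" where
  "bounded_op T \<longleftrightarrow>
     (\<forall>f\<in>l2. T f \<in> l2) \<and>
     (\<forall>f\<in>l2. \<forall>g\<in>l2. T (\<lambda>x. f x + g x) = (\<lambda>x. T f x + T g x)) \<and>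
     (\<forall>f\<in>l2. \<forall>c. T (\<lambda>x. c * f x) = (\<lambda>x. c * T f x)) \<and>
     (\<exists>C. \<forall>f\<in>l2. l2_norm (T f) \<le> C * l2_norm f)"

definition op_norm :: "'a op \<Rightarrow> real" where
  "op_norm T = Sup {l2_norm (T f) | f. f \<in> l2 \<and> l2_norm f \<le> 1}"

definition delta :: "'a \<Rightarrow> 'a \<Rightarrow> complex" where
  "delta y = (\<lambda>z. if z = y then 1 else 0)"

text \<open>Matrix entry T_{x,y} = <T delta_y, delta_x> = (T delta_y)(x).\<close>
definition entry :: "'a op \<Rightarrow> 'a \<Rightarrow> 'a \<Rightarrow> complex" where
  "entry T x y = T (delta y) x"

definition chi :: "'a set \<Rightarrow> 'a op" where
  "chi A = (\<lambda>f x. if x \<in> A then f x else 0)"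

definition bounded_geometry :: "'a::metric_space itself \<Rightarrow> bool" where
  "bounded_geometry _ \<longleftrightarrow>
     (\<forall>R>0. \<exists>N::nat. \<forall>x::'a. finite (cball x R) \<and> card (cball x R) \<le> N)"

definition ghost_op :: "('a::metric_space) op \<Rightarrow> bool" where
  "ghost_op T \<longleftrightarrow>
     (\<forall>\<epsilon>>0. \<exists>B::'a set. bounded B \<and>
        (\<forall>x y. x \<notin> B \<and> y \<notin> B \<longrightarrow> cmod (entry T x y) < \<epsilon>))"

text \<open>d(A,B) \<ge> R is expressed pointwise (inf of distances, with inf over empty = infinity).\<close>
definition quasi_local :: "('a::metric_space) op \<Rightarrow> bool" where
  "quasi_local T \<longleftrightarrow>
     (\<forall>\<epsilon>>0. \<exists>R>0. \<forall>A B::'a set. (\<forall>a\<in>A. \<forall>b\<in>B. R \<le> dist a b) \<longrightarrow>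
        op_norm (chi A \<circ> T \<circ> chi B) \<le> \<epsilon>)"

definition C_uq :: "('a::metric_space) op set" where
  "C_uq = {T. bounded_op T \<and> quasi_local T}"

definition ghost_ideal :: "('a::metric_space) op set" where
  "ghost_ideal = {T \<in> C_uq. ghost_op T}"

end

theory Submission
  imports Defs
begin

(* Matrix entries are bounded by the operator norm, so the ghost property survives sums, scalar
  multiples and norm limits. Quasi-locality survives them because the compressions
  chi A \<circ> T \<circ> chi B split accordingly; for a product one inserts chi C + chi (- C) between the
  factors, with C the R-neighbourhood of A.
  For S quasi-local and T ghost, split (S T)_{x,y} = \<Sum>_z S_{x,z} T_{z,y} at the ball C of radius R
  around x. By bounded geometry the near part has at most N(R) terms, each small once x and y lie
  outside the R-neighbourhood of the bounded set off which T has small entries; the far part is a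
  coefficient of chi {x} \<circ> S \<circ> chi (- C), whose norm is small by quasi-locality. For T S one uses
  the ball around y instead. *)

section \<open>Square-summable functions\<close>

lemma l2_norm_nonneg: "0 \<le> l2_norm f"
  unfolding l2_norm_def by (simp add: infsum_nonneg)

lemma L2_set_le_l2_norm:
  assumes "f \<in> l2" "finite F"
  shows "L2_set (\<lambda>x. cmod (f x)) F \<le> l2_norm f"
proof -
  have "(\<Sum>x\<in>F. (cmod (f x))\<^sup>2) \<le> infsum (\<lambda>x. (cmod (f x))\<^sup>2) UNIV"
    using infsum_mono2[of "\<lambda>x. (cmod (f x))\<^sup>2" F UNIV] assms by (simp add: l2_def)
  then show ?thesis
    unfolding L2_set_def l2_norm_def by simp
qed

lemma norm_le_l2_norm: "f \<in> l2 \<Longrightarrow> cmod (f x) \<le> l2_norm f"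
  using L2_set_le_l2_norm[of f "{x}"] by simp

lemma l2_norm_eq_0D: "f \<in> l2 \<Longrightarrow> l2_norm f = 0 \<Longrightarrow> f = (\<lambda>x. 0)"
  using norm_le_l2_norm by (metis norm_le_zero_iff ext)

lemma l2_dominated:
  assumes f: "f \<in> l2" and g: "g \<in> l2" and h: "\<And>x. cmod (h x) \<le> cmod (f x) + cmod (g x)"
  shows "h \<in> l2" and "l2_norm h \<le> l2_norm f + l2_norm g"
proof -
  have finite_sums: "(\<Sum>x\<in>F. (cmod (h x))\<^sup>2) \<le> (l2_norm f + l2_norm g)\<^sup>2" if "finite F" for F
  proof -
    have "L2_set (\<lambda>x. cmod (h x)) F \<le> L2_set (\<lambda>x. cmod (f x) + cmod (g x)) F"
      by (rule L2_set_mono) (use h in auto)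
    also have "\<dots> \<le> L2_set (\<lambda>x. cmod (f x)) F + L2_set (\<lambda>x. cmod (g x)) F"
      by (rule L2_set_triangle_ineq)
    also have "\<dots> \<le> l2_norm f + l2_norm g"
      using L2_set_le_l2_norm[OF f that] L2_set_le_l2_norm[OF g that] by simp
    finally have "(L2_set (\<lambda>x. cmod (h x)) F)\<^sup>2 \<le> (l2_norm f + l2_norm g)\<^sup>2"
      by (simp add: power_mono L2_set_nonneg)
    then show ?thesis
      unfolding L2_set_def by (simp add: sum_nonneg)
  qed
  have summable: "(\<lambda>x. (cmod (h x))\<^sup>2) summable_on UNIV"
    by (rule nonneg_bdd_above_summable_on) (auto intro!: bdd_aboveI finite_sums)
  then show "h \<in> l2"
    by (simp add: l2_def)
  have "infsum (\<lambda>x. (cmod (h x))\<^sup>2) UNIV \<le> (l2_norm f + l2_norm g)\<^sup>2"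
    by (rule infsum_le_finite_sums[OF summable]) (use finite_sums in auto)
  then show "l2_norm h \<le> l2_norm f + l2_norm g"
    unfolding l2_norm_def
    by (metis add_nonneg_nonneg l2_norm_nonneg real_le_lsqrt real_sqrt_ge_zero infsum_nonneg zero_le_power2)
qed

lemma l2_zero: "(\<lambda>x. 0) \<in> l2" and l2_norm_zero: "l2_norm (\<lambda>x. 0) = 0"
  by (auto simp: l2_def l2_norm_def)

lemma l2_add:
  assumes "f \<in> l2" "g \<in> l2"
  shows "(\<lambda>x. f x + g x) \<in> l2" and "l2_norm (\<lambda>x. f x + g x) \<le> l2_norm f + l2_norm g"
  by (rule l2_dominated[OF assms]; simp add: norm_triangle_ineq)+

lemma l2_chi:
  assumes "f \<in> l2"
  shows "chi A f \<in> l2" and "l2_norm (chi A f) \<le> l2_norm f"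
  using l2_dominated[OF assms l2_zero, of "chi A f"] by (auto simp: chi_def l2_norm_zero)

lemma l2_scale:
  assumes "f \<in> l2"
  shows "(\<lambda>x. c * f x) \<in> l2" and "l2_norm (\<lambda>x. c * f x) = cmod c * l2_norm f"
proof -
  have squares: "(\<lambda>x. (cmod (c * f x))\<^sup>2) = (\<lambda>x. (cmod c)\<^sup>2 * (cmod (f x))\<^sup>2)"
    by (simp add: norm_mult power_mult_distrib)
  have summable: "(\<lambda>x. (cmod (f x))\<^sup>2) summable_on UNIV"
    using assms by (simp add: l2_def)
  show "(\<lambda>x. c * f x) \<in> l2"
    unfolding l2_def mem_Collect_eq squares by (rule summable_on_cmult_right[OF summable])
  show "l2_norm (\<lambda>x. c * f x) = cmod c * l2_norm f"
    unfolding l2_norm_def squares infsum_cmult_right[OF summable] by (simp add: real_sqrt_mult)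
qed

lemma l2_delta: "delta y \<in> l2" and l2_norm_delta: "l2_norm (delta y) = 1"
proof -
  have squares: "(\<lambda>x. (cmod (delta y x))\<^sup>2) = (\<lambda>x. if x \<in> {y} then 1 else 0)"
    by (auto simp: delta_def)
  have "(\<lambda>x. if x \<in> {y} then (1::real) else 0) summable_on UNIV"
    by (rule summable_on_cong_neutral[where S="{y}" and f="\<lambda>_. 1", THEN iffD1]) auto
  then show "delta y \<in> l2"
    unfolding l2_def mem_Collect_eq squares .
  have "infsum (\<lambda>x. if x \<in> {y} then (1::real) else 0) UNIV = 1"
    by (subst infsum_cong_neutral[where T="{y}" and g="\<lambda>_. 1"]) auto
  then show "l2_norm (delta y) = 1"
    unfolding l2_norm_def squares by simp
qed

lemma chi_add_chi_compl: "(\<lambda>x. chi C g x + chi (- C) g x) = g"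
  by (simp add: chi_def fun_eq_iff)

section \<open>Bounded operators and the operator norm\<close>

lemma bounded_opI:
  assumes "\<And>f. f \<in> l2 \<Longrightarrow> T f \<in> l2"
    and "\<And>f g. f \<in> l2 \<Longrightarrow> g \<in> l2 \<Longrightarrow> T (\<lambda>x. f x + g x) = (\<lambda>x. T f x + T g x)"
    and "\<And>f c. f \<in> l2 \<Longrightarrow> T (\<lambda>x. c * f x) = (\<lambda>x. c * T f x)"
    and "\<And>f. f \<in> l2 \<Longrightarrow> l2_norm (T f) \<le> C * l2_norm f"
  shows "bounded_op T"
  unfolding bounded_op_def using assms by blast

lemma bounded_op_in_l2: "bounded_op T \<Longrightarrow> f \<in> l2 \<Longrightarrow> T f \<in> l2"
  unfolding bounded_op_def by blast

lemma bounded_op_add_apply: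
  "bounded_op T \<Longrightarrow> f \<in> l2 \<Longrightarrow> g \<in> l2 \<Longrightarrow> T (\<lambda>x. f x + g x) = (\<lambda>x. T f x + T g x)"
  unfolding bounded_op_def by blast

lemma bounded_op_scale_apply:
  "bounded_op T \<Longrightarrow> f \<in> l2 \<Longrightarrow> T (\<lambda>x. c * f x) = (\<lambda>x. c * T f x)"
  unfolding bounded_op_def by blast

lemma bounded_op_zero_apply: "bounded_op T \<Longrightarrow> T (\<lambda>x. 0) = (\<lambda>x. 0)"
  using bounded_op_scale_apply[OF _ l2_zero, of T 0] by simp

lemma op_norm_upper:
  assumes T: "bounded_op T" and "f \<in> l2" "l2_norm f \<le> 1"
  shows "l2_norm (T f) \<le> op_norm T"
proof -
  obtain C where C: "\<And>f. f \<in> l2 \<Longrightarrow> l2_norm (T f) \<le> C * l2_norm f"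
    using T unfolding bounded_op_def by blast
  have "C * l2_norm g \<le> max C 0" if "l2_norm g \<le> 1" for g :: "'a \<Rightarrow> complex"
    using that l2_norm_nonneg[of g] by (cases "C \<ge> 0") (auto intro: mult_left_le mult_nonpos_nonneg)
  then have "bdd_above {l2_norm (T f) | f. f \<in> l2 \<and> l2_norm f \<le> 1}"
    by (auto intro!: bdd_aboveI[where M="max C 0"] intro: order.trans[OF C])
  then show ?thesis
    unfolding op_norm_def using assms(2,3) by (auto intro!: cSup_upper)
qed

lemma op_norm_le:
  assumes "\<And>f. f \<in> l2 \<Longrightarrow> l2_norm f \<le> 1 \<Longrightarrow> l2_norm (T f) \<le> C"
  shows "op_norm T \<le> C"
  unfolding op_norm_def
proof (rule cSup_least)
  have "l2_norm (T (\<lambda>x. 0)) \<in> {l2_norm (T f) | f. f \<in> l2 \<and> l2_norm f \<le> 1}"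
    by (auto intro!: exI[of _ "\<lambda>x. 0"] simp: l2_zero l2_norm_zero)
  then show "{l2_norm (T f) | f. f \<in> l2 \<and> l2_norm f \<le> 1} \<noteq> {}"
    by blast
qed (use assms in blast)

lemma op_norm_nonneg: "bounded_op T \<Longrightarrow> 0 \<le> op_norm T"
  using op_norm_upper[OF _ l2_zero] l2_norm_nonneg by (metis l2_norm_zero order.trans zero_le_one)

lemma l2_norm_apply_le:
  assumes T: "bounded_op T" and f: "f \<in> l2"
  shows "l2_norm (T f) \<le> op_norm T * l2_norm f"
proof (cases "l2_norm f = 0")
  case True
  then show ?thesis
    using l2_norm_eq_0D[OF f] bounded_op_zero_apply[OF T] by (simp add: l2_norm_zero)
next
  case False
  define n where "n = l2_norm f"
  have n: "n > 0"
    using False l2_norm_nonneg[of f] by (simp add: n_def)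
  define c where "c = complex_of_real (1 / n)"
  have "l2_norm (\<lambda>x. c * f x) = cmod c * n"
    unfolding n_def by (rule l2_scale(2)[OF f])
  then have "l2_norm (\<lambda>x. c * f x) = 1"
    using n by (simp add: c_def norm_divide)
  then have "l2_norm (T (\<lambda>x. c * f x)) \<le> op_norm T"
    using op_norm_upper[OF T l2_scale(1)[OF f]] by simp
  moreover have "l2_norm (T (\<lambda>x. c * f x)) = cmod c * l2_norm (T f)"
    by (simp only: bounded_op_scale_apply[OF T f] l2_scale(2)[OF bounded_op_in_l2[OF T f]])
  ultimately have "l2_norm (T f) / n \<le> op_norm T"
    using n by (simp add: c_def norm_divide)
  then show ?thesis
    using n by (simp add: n_def field_simps)
qed

lemma norm_apply_le:
  "bounded_op T \<Longrightarrow> f \<in> l2 \<Longrightarrow> cmod (T f x) \<le> op_norm T * l2_norm f"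
  using norm_le_l2_norm[OF bounded_op_in_l2] l2_norm_apply_le order.trans by metis

lemma norm_entry_le_op_norm: "bounded_op T \<Longrightarrow> cmod (entry T x y) \<le> op_norm T"
  using norm_apply_le[OF _ l2_delta] by (simp add: entry_def l2_norm_delta)

lemma op_norm_cong: "(\<And>f. f \<in> l2 \<Longrightarrow> S f = T f) \<Longrightarrow> op_norm S = op_norm T"
  unfolding op_norm_def by (metis (mono_tags, lifting))

lemma bounded_op_zero: "bounded_op (\<lambda>f x. 0)"
  by (rule bounded_opI[where C=0]) (simp_all add: l2_zero l2_norm_zero)

lemma op_norm_zero: "op_norm (\<lambda>f x. 0) = 0"
  by (intro antisym op_norm_le) (simp_all add: l2_norm_zero op_norm_nonneg[OF bounded_op_zero])

lemma bounded_op_chi: "bounded_op (chi A)"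
proof (rule bounded_opI[where C=1])
  show "chi A f \<in> l2" "l2_norm (chi A f) \<le> 1 * l2_norm f" if "f \<in> l2" for f
    using l2_chi[OF that] by simp_all
qed (simp_all add: chi_def fun_eq_iff)

lemma op_norm_chi_le: "op_norm (chi A) \<le> 1"
  by (rule op_norm_le) (use l2_chi order.trans in blast)

lemma bounded_op_add:
  assumes S: "bounded_op S" and T: "bounded_op T"
  shows "bounded_op (\<lambda>f x. S f x + T f x)"
    and "op_norm (\<lambda>f x. S f x + T f x) \<le> op_norm S + op_norm T"
proof -
  have bound: "l2_norm (\<lambda>x. S f x + T f x) \<le> (op_norm S + op_norm T) * l2_norm f" if f: "f \<in> l2" for f
  proof -
    have "l2_norm (\<lambda>x. S f x + T f x) \<le> l2_norm (S f) + l2_norm (T f)"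
      using l2_add bounded_op_in_l2 S T f by blast
    also have "\<dots> \<le> (op_norm S + op_norm T) * l2_norm f"
      using l2_norm_apply_le[OF S f] l2_norm_apply_le[OF T f] by (simp add: algebra_simps)
    finally show ?thesis .
  qed
  show "bounded_op (\<lambda>f x. S f x + T f x)"
    by (rule bounded_opI[OF _ _ _ bound])
      (simp_all add: l2_add bounded_op_in_l2 S T bounded_op_add_apply bounded_op_scale_apply algebra_simps)
  show "op_norm (\<lambda>f x. S f x + T f x) \<le> op_norm S + op_norm T"
    using bound op_norm_nonneg[OF S] op_norm_nonneg[OF T]
    by (intro op_norm_le) (meson add_nonneg_nonneg mult_left_le order.trans)
qed

lemma bounded_op_scale:
  assumes T: "bounded_op T"
  shows "bounded_op (\<lambda>f x. c * T f x)" and "op_norm (\<lambda>f x. c * T f x) \<le> cmod c * op_norm T"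
proof -
  have bound: "l2_norm (\<lambda>x. c * T f x) \<le> (cmod c * op_norm T) * l2_norm f" if f: "f \<in> l2" for f
    using l2_scale(2)[OF bounded_op_in_l2[OF T f]] l2_norm_apply_le[OF T f]
    by (simp add: mult_left_mono mult.assoc)
  show "bounded_op (\<lambda>f x. c * T f x)"
    by (rule bounded_opI[OF _ _ _ bound])
      (simp_all add: l2_scale bounded_op_in_l2 T bounded_op_add_apply bounded_op_scale_apply algebra_simps)
  show "op_norm (\<lambda>f x. c * T f x) \<le> cmod c * op_norm T"
    using bound op_norm_nonneg[OF T]
    by (intro op_norm_le) (meson mult_left_le norm_ge_zero zero_le_mult_iff order.trans)
qed

lemma bounded_op_diff: "bounded_op S \<Longrightarrow> bounded_op T \<Longrightarrow> bounded_op (\<lambda>f x. S f x - T f x)"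
  using bounded_op_add(1)[OF _ bounded_op_scale(1), of S T "-1"] by simp

lemma bounded_op_comp:
  assumes S: "bounded_op S" and T: "bounded_op T"
  shows "bounded_op (S \<circ> T)" and "op_norm (S \<circ> T) \<le> op_norm S * op_norm T"
proof -
  have bound: "l2_norm ((S \<circ> T) f) \<le> (op_norm S * op_norm T) * l2_norm f" if f: "f \<in> l2" for f
  proof -
    have "l2_norm ((S \<circ> T) f) \<le> op_norm S * l2_norm (T f)"
      using l2_norm_apply_le[OF S bounded_op_in_l2[OF T f]] by simp
    also have "\<dots> \<le> op_norm S * (op_norm T * l2_norm f)"
      using l2_norm_apply_le[OF T f] op_norm_nonneg[OF S] by (rule mult_left_mono)
    finally show ?thesis
      by (simp add: mult.assoc)
  qed
  show "bounded_op (S \<circ> T)"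
    by (rule bounded_opI[OF _ _ _ bound])
      (simp_all add: bounded_op_in_l2 S T bounded_op_add_apply bounded_op_scale_apply)
  show "op_norm (S \<circ> T) \<le> op_norm S * op_norm T"
    using bound op_norm_nonneg[OF S] op_norm_nonneg[OF T]
    by (intro op_norm_le) (meson mult_left_le zero_le_mult_iff order.trans)
qed

lemma op_norm_chi_comp_le: "bounded_op T \<Longrightarrow> op_norm (chi A \<circ> T) \<le> op_norm T"
  using bounded_op_comp(2)[OF bounded_op_chi] op_norm_chi_le op_norm_nonneg
  by (metis mult_right_mono mult_1 order.trans)

lemma op_norm_comp_chi_le: "bounded_op T \<Longrightarrow> op_norm (T \<circ> chi A) \<le> op_norm T"
  using bounded_op_comp(2)[OF _ bounded_op_chi] op_norm_chi_le op_norm_nonneg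
  by (metis mult_left_mono mult_1_right order.trans)

lemma bounded_op_compression: "bounded_op T \<Longrightarrow> bounded_op (chi A \<circ> T \<circ> chi B)"
  by (intro bounded_op_comp(1) bounded_op_chi)

section \<open>Quasi-local operators\<close>

lemma mult_divide_abs_plus_one_less:
  assumes "0 < e"
  shows "(K::real) * (e / (\<bar>K\<bar> + 1)) < e"
proof -
  have "K * (e / (\<bar>K\<bar> + 1)) \<le> \<bar>K\<bar> * (e / (\<bar>K\<bar> + 1))"
    using assms by (intro mult_right_mono) auto
  also have "\<dots> < (\<bar>K\<bar> + 1) * (e / (\<bar>K\<bar> + 1))"
    using assms by (intro mult_strict_right_mono) auto
  also have "\<dots> = e"
    by simp
  finally show ?thesis .
qed

lemma quasi_localI_scaled:
  assumes "\<And>\<epsilon>. 0 < \<epsilon> \<Longrightarrow> \<exists>R>0. \<forall>A B. (\<forall>a\<in>A. \<forall>b\<in>B. R \<le> dist a b) \<longrightarrow>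
             op_norm (chi A \<circ> T \<circ> chi B) \<le> K * \<epsilon>"
  shows "quasi_local T"
  unfolding quasi_local_def
proof (intro allI impI)
  fix \<epsilon> :: real
  assume "0 < \<epsilon>"
  then obtain R where "R > 0" and R: "\<forall>A B. (\<forall>a\<in>A. \<forall>b\<in>B. R \<le> dist a b) \<longrightarrow>
      op_norm (chi A \<circ> T \<circ> chi B) \<le> K * (\<epsilon> / (\<bar>K\<bar> + 1))"
    using assms[of "\<epsilon> / (\<bar>K\<bar> + 1)"] by auto
  have "op_norm (chi A \<circ> T \<circ> chi B) \<le> \<epsilon>" if "\<forall>a\<in>A. \<forall>b\<in>B. R \<le> dist a b" for A B
    using R that mult_divide_abs_plus_one_less[OF \<open>0 < \<epsilon>\<close>, of K] by fastforce
  with \<open>R > 0\<close> show "\<exists>R>0. \<forall>A B. (\<forall>a\<in>A. \<forall>b\<in>B. R \<le> dist a b) \<longrightarrow>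
      op_norm (chi A \<circ> T \<circ> chi B) \<le> \<epsilon>"
    by blast
qed

lemma quasi_localD:
  assumes "quasi_local T" "0 < \<epsilon>"
  obtains R where "R > 0"
    "\<And>A B. \<forall>a\<in>A. \<forall>b\<in>B. R \<le> dist a b \<Longrightarrow> op_norm (chi A \<circ> T \<circ> chi B) \<le> \<epsilon>"
  using assms(1)[unfolded quasi_local_def, rule_format, OF assms(2)] that by blast

lemma quasi_local_zero: "quasi_local (\<lambda>f x. 0)"
proof (rule quasi_localI_scaled[where K=0])
  have "chi A \<circ> (\<lambda>f x. 0) \<circ> chi B = (\<lambda>f x. 0)" for A B :: "'a set"
    by (simp add: chi_def fun_eq_iff)
  then show "\<exists>R>0. \<forall>A B :: 'a set. (\<forall>a\<in>A. \<forall>b\<in>B. R \<le> dist a b) \<longrightarrow>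
               op_norm (chi A \<circ> (\<lambda>f x. 0) \<circ> chi B) \<le> 0 * \<epsilon>" for \<epsilon>
    by (auto simp: op_norm_zero intro!: exI[of _ 1])
qed

lemma quasi_local_add:
  assumes S: "bounded_op S" "quasi_local S" and T: "bounded_op T" "quasi_local T"
  shows "quasi_local (\<lambda>f x. S f x + T f x)"
proof (rule quasi_localI_scaled[where K=2])
  fix \<epsilon> :: real
  assume "0 < \<epsilon>"
  obtain R1 where R1: "R1 > 0"
    "\<And>A B. \<forall>a\<in>A. \<forall>b\<in>B. R1 \<le> dist a b \<Longrightarrow> op_norm (chi A \<circ> S \<circ> chi B) \<le> \<epsilon>"
    using quasi_localD[OF S(2) \<open>0 < \<epsilon>\<close>] by blast
  obtain R2 where R2: "R2 > 0"
    "\<And>A B. \<forall>a\<in>A. \<forall>b\<in>B. R2 \<le> dist a b \<Longrightarrow> op_norm (chi A \<circ> T \<circ> chi B) \<le> \<epsilon>"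
    using quasi_localD[OF T(2) \<open>0 < \<epsilon>\<close>] by blast
  have "op_norm (chi A \<circ> (\<lambda>f x. S f x + T f x) \<circ> chi B) \<le> 2 * \<epsilon>"
    if far: "\<forall>a\<in>A. \<forall>b\<in>B. max R1 R2 \<le> dist a b" for A B
  proof -
    have split: "chi A \<circ> (\<lambda>f x. S f x + T f x) \<circ> chi B
        = (\<lambda>f x. (chi A \<circ> S \<circ> chi B) f x + (chi A \<circ> T \<circ> chi B) f x)"
      by (simp add: chi_def fun_eq_iff)
    have "op_norm (chi A \<circ> (\<lambda>f x. S f x + T f x) \<circ> chi B)
        \<le> op_norm (chi A \<circ> S \<circ> chi B) + op_norm (chi A \<circ> T \<circ> chi B)"
      unfolding split
      by (rule bounded_op_add(2)[OF bounded_op_compression[OF S(1)] bounded_op_compression[OF T(1)]])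
    also have "\<dots> \<le> \<epsilon> + \<epsilon>"
      using far by (intro add_mono R1(2) R2(2)) simp_all
    finally show ?thesis
      by simp
  qed
  then show "\<exists>R>0. \<forall>A B. (\<forall>a\<in>A. \<forall>b\<in>B. R \<le> dist a b) \<longrightarrow>
               op_norm (chi A \<circ> (\<lambda>f x. S f x + T f x) \<circ> chi B) \<le> 2 * \<epsilon>"
    using R1(1) by (intro exI[of _ "max R1 R2"]) (simp add: less_max_iff_disj)
qed

lemma quasi_local_scale:
  assumes T: "bounded_op T" "quasi_local T"
  shows "quasi_local (\<lambda>f x. c * T f x)"
proof (rule quasi_localI_scaled[where K="cmod c"])
  fix \<epsilon> :: real
  assume "0 < \<epsilon>"
  obtain R where R: "R > 0"
    "\<And>A B. \<forall>a\<in>A. \<forall>b\<in>B. R \<le> dist a b \<Longrightarrow> op_norm (chi A \<circ> T \<circ> chi B) \<le> \<epsilon>"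
    using quasi_localD[OF T(2) \<open>0 < \<epsilon>\<close>] by blast
  have "op_norm (chi A \<circ> (\<lambda>f x. c * T f x) \<circ> chi B) \<le> cmod c * \<epsilon>"
    if far: "\<forall>a\<in>A. \<forall>b\<in>B. R \<le> dist a b" for A B
  proof -
    have "chi A \<circ> (\<lambda>f x. c * T f x) \<circ> chi B = (\<lambda>f x. c * (chi A \<circ> T \<circ> chi B) f x)"
      by (simp add: chi_def fun_eq_iff)
    then have "op_norm (chi A \<circ> (\<lambda>f x. c * T f x) \<circ> chi B) \<le> cmod c * op_norm (chi A \<circ> T \<circ> chi B)"
      using bounded_op_scale(2)[OF bounded_op_compression[OF T(1)]] by simp
    also have "\<dots> \<le> cmod c * \<epsilon>"
      using R(2)[OF far] by (simp add: mult_left_mono)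
    finally show ?thesis .
  qed
  then show "\<exists>R>0. \<forall>A B. (\<forall>a\<in>A. \<forall>b\<in>B. R \<le> dist a b) \<longrightarrow>
               op_norm (chi A \<circ> (\<lambda>f x. c * T f x) \<circ> chi B) \<le> cmod c * \<epsilon>"
    using R(1) by blast
qed

lemma compression_comp_split:
  assumes S: "bounded_op S" and T: "bounded_op T" and f: "f \<in> l2"
  shows "(chi A \<circ> (S \<circ> T) \<circ> chi B) f
    = (\<lambda>x. ((chi A \<circ> S) \<circ> (chi C \<circ> T \<circ> chi B)) f x + ((chi A \<circ> S \<circ> chi (- C)) \<circ> (T \<circ> chi B)) f x)"
proof -
  define h where "h = T (chi B f)"
  have h: "h \<in> l2"
    unfolding h_def using bounded_op_in_l2[OF T] l2_chi(1)[OF f] .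
  have "S h = (\<lambda>x. S (chi C h) x + S (chi (- C) h) x)"
    using bounded_op_add_apply[OF S l2_chi(1)[OF h, of C] l2_chi(1)[OF h, of "- C"]]
    unfolding chi_add_chi_compl .
  then show ?thesis
    by (simp add: h_def chi_def fun_eq_iff)
qed

lemma op_norm_compression_comp_le:
  assumes S: "bounded_op S" and T: "bounded_op T"
  shows "op_norm (chi A \<circ> (S \<circ> T) \<circ> chi B)
    \<le> op_norm S * op_norm (chi C \<circ> T \<circ> chi B) + op_norm (chi A \<circ> S \<circ> chi (- C)) * op_norm T"
proof -
  have bounded: "bounded_op (chi A \<circ> S)" "bounded_op (chi C \<circ> T \<circ> chi B)"
      "bounded_op (chi A \<circ> S \<circ> chi (- C))" "bounded_op (T \<circ> chi B)"
    using bounded_op_comp(1) bounded_op_chi bounded_op_compression S T by blast+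
  have "op_norm (chi A \<circ> (S \<circ> T) \<circ> chi B)
      = op_norm (\<lambda>f x. ((chi A \<circ> S) \<circ> (chi C \<circ> T \<circ> chi B)) f x
                       + ((chi A \<circ> S \<circ> chi (- C)) \<circ> (T \<circ> chi B)) f x)"
    by (rule op_norm_cong) (rule compression_comp_split[OF S T])
  also have "\<dots> \<le> op_norm (chi A \<circ> S) * op_norm (chi C \<circ> T \<circ> chi B)
                + op_norm (chi A \<circ> S \<circ> chi (- C)) * op_norm (T \<circ> chi B)"
    using bounded_op_add(2)[OF bounded_op_comp(1)[OF bounded(1,2)] bounded_op_comp(1)[OF bounded(3,4)]]
      bounded_op_comp(2)[OF bounded(1,2)] bounded_op_comp(2)[OF bounded(3,4)]
    by linarith
  also have "\<dots> \<le> op_norm S * op_norm (chi C \<circ> T \<circ> chi B) + op_norm (chi A \<circ> S \<circ> chi (- C)) * op_norm T"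
    by (intro add_mono mult_right_mono mult_left_mono op_norm_chi_comp_le[OF S] op_norm_comp_chi_le[OF T]
        op_norm_nonneg[OF bounded(2)] op_norm_nonneg[OF bounded(3)])
  finally show ?thesis .
qed

lemma quasi_local_comp:
  assumes S: "bounded_op S" "quasi_local S" and T: "bounded_op T" "quasi_local T"
  shows "quasi_local (S \<circ> T)"
proof (rule quasi_localI_scaled[where K="op_norm S + op_norm T"])
  fix \<epsilon> :: real
  assume "0 < \<epsilon>"
  obtain R1 where R1: "R1 > 0"
    "\<And>A B. \<forall>a\<in>A. \<forall>b\<in>B. R1 \<le> dist a b \<Longrightarrow> op_norm (chi A \<circ> S \<circ> chi B) \<le> \<epsilon>"
    using quasi_localD[OF S(2) \<open>0 < \<epsilon>\<close>] by blast
  obtain R2 where R2: "R2 > 0"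
    "\<And>A B. \<forall>a\<in>A. \<forall>b\<in>B. R2 \<le> dist a b \<Longrightarrow> op_norm (chi A \<circ> T \<circ> chi B) \<le> \<epsilon>"
    using quasi_localD[OF T(2) \<open>0 < \<epsilon>\<close>] by blast
  have "op_norm (chi A \<circ> (S \<circ> T) \<circ> chi B) \<le> (op_norm S + op_norm T) * \<epsilon>"
    if far: "\<forall>a\<in>A. \<forall>b\<in>B. R1 + R2 \<le> dist a b" for A B
  proof -
    define C where "C = {z. \<exists>a\<in>A. dist a z < R1}"
    have "\<forall>z\<in>C. \<forall>b\<in>B. R2 \<le> dist z b"
    proof (intro ballI)
      fix z b
      assume "z \<in> C" "b \<in> B"
      then obtain a where "a \<in> A" "dist a z < R1"
        unfolding C_def by blast
      with far \<open>b \<in> B\<close> have "R1 + R2 \<le> dist a b"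
        by blast
      with \<open>dist a z < R1\<close> dist_triangle[of a b z] show "R2 \<le> dist z b"
        by linarith
    qed
    then have near: "op_norm (chi C \<circ> T \<circ> chi B) \<le> \<epsilon>"
      by (rule R2(2))
    have "\<forall>a\<in>A. \<forall>z\<in>- C. R1 \<le> dist a z"
      unfolding C_def by (auto simp: not_less)
    then have away: "op_norm (chi A \<circ> S \<circ> chi (- C)) \<le> \<epsilon>"
      by (rule R1(2))
    have "op_norm (chi A \<circ> (S \<circ> T) \<circ> chi B)
        \<le> op_norm S * op_norm (chi C \<circ> T \<circ> chi B) + op_norm (chi A \<circ> S \<circ> chi (- C)) * op_norm T"
      by (rule op_norm_compression_comp_le[OF S(1) T(1)])
    also have "\<dots> \<le> op_norm S * \<epsilon> + \<epsilon> * op_norm T"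
      by (intro add_mono mult_left_mono mult_right_mono near away op_norm_nonneg[OF S(1)] op_norm_nonneg[OF T(1)])
    finally show ?thesis
      by (simp add: algebra_simps)
  qed
  then show "\<exists>R>0. \<forall>A B. (\<forall>a\<in>A. \<forall>b\<in>B. R \<le> dist a b) \<longrightarrow>
               op_norm (chi A \<circ> (S \<circ> T) \<circ> chi B) \<le> (op_norm S + op_norm T) * \<epsilon>"
    using R1(1) R2(1) by (intro exI[of _ "R1 + R2"]) simp
qed

section \<open>Ghost operators\<close>

lemma ghost_opI_scaled:
  assumes "\<And>\<epsilon>. 0 < \<epsilon> \<Longrightarrow> \<exists>B. bounded B \<and> (\<forall>x y. x \<notin> B \<and> y \<notin> B \<longrightarrow> cmod (entry T x y) \<le> K * \<epsilon>)"
  shows "ghost_op T"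
  unfolding ghost_op_def
proof (intro allI impI)
  fix \<epsilon> :: real
  assume "0 < \<epsilon>"
  then obtain B where "bounded B"
    and B: "\<forall>x y. x \<notin> B \<and> y \<notin> B \<longrightarrow> cmod (entry T x y) \<le> K * (\<epsilon> / (\<bar>K\<bar> + 1))"
    using assms[of "\<epsilon> / (\<bar>K\<bar> + 1)"] by auto
  have "cmod (entry T x y) < \<epsilon>" if "x \<notin> B" "y \<notin> B" for x y
    using B that mult_divide_abs_plus_one_less[OF \<open>0 < \<epsilon>\<close>, of K] by fastforce
  with \<open>bounded B\<close> show "\<exists>B. bounded B \<and> (\<forall>x y. x \<notin> B \<and> y \<notin> B \<longrightarrow> cmod (entry T x y) < \<epsilon>)"
    by blast
qed

lemma ghost_opD:
  assumes "ghost_op T" "0 < \<epsilon>"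
  obtains B where "bounded B" "\<And>x y. x \<notin> B \<Longrightarrow> y \<notin> B \<Longrightarrow> cmod (entry T x y) < \<epsilon>"
  using assms(1)[unfolded ghost_op_def, rule_format, OF assms(2)] that by blast

lemma ghost_op_zero: "ghost_op (\<lambda>f x. 0)"
  by (rule ghost_opI_scaled[where K=0]) (auto simp: entry_def intro!: exI[of _ "{}"])

lemma ghost_op_add:
  assumes "ghost_op S" "ghost_op T"
  shows "ghost_op (\<lambda>f x. S f x + T f x)"
proof (rule ghost_opI_scaled[where K=2])
  fix \<epsilon> :: real
  assume "0 < \<epsilon>"
  obtain B1 where "bounded B1" and B1: "\<And>x y. x \<notin> B1 \<Longrightarrow> y \<notin> B1 \<Longrightarrow> cmod (entry S x y) < \<epsilon>"
    using ghost_opD[OF assms(1) \<open>0 < \<epsilon>\<close>] by blast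
  obtain B2 where "bounded B2" and B2: "\<And>x y. x \<notin> B2 \<Longrightarrow> y \<notin> B2 \<Longrightarrow> cmod (entry T x y) < \<epsilon>"
    using ghost_opD[OF assms(2) \<open>0 < \<epsilon>\<close>] by blast
  have "cmod (entry (\<lambda>f x. S f x + T f x) x y) \<le> 2 * \<epsilon>" if "x \<notin> B1 \<union> B2" "y \<notin> B1 \<union> B2" for x y
  proof -
    have "cmod (entry (\<lambda>f x. S f x + T f x) x y) \<le> cmod (entry S x y) + cmod (entry T x y)"
      unfolding entry_def by (rule norm_triangle_ineq)
    also have "\<dots> \<le> 2 * \<epsilon>"
      using B1[of x y] B2[of x y] that by simp
    finally show ?thesis .
  qed
  with \<open>bounded B1\<close> \<open>bounded B2\<close>
  show "\<exists>B. bounded B \<and> (\<forall>x y. x \<notin> B \<and> y \<notin> B \<longrightarrow> cmod (entry (\<lambda>f x. S f x + T f x) x y) \<le> 2 * \<epsilon>)"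
    by (intro exI[of _ "B1 \<union> B2"]) auto
qed

lemma ghost_op_scale:
  assumes "ghost_op T"
  shows "ghost_op (\<lambda>f x. c * T f x)"
proof (rule ghost_opI_scaled[where K="cmod c"])
  fix \<epsilon> :: real
  assume "0 < \<epsilon>"
  obtain B where "bounded B" and B: "\<And>x y. x \<notin> B \<Longrightarrow> y \<notin> B \<Longrightarrow> cmod (entry T x y) < \<epsilon>"
    using ghost_opD[OF assms \<open>0 < \<epsilon>\<close>] by blast
  have "cmod (entry (\<lambda>f x. c * T f x) x y) \<le> cmod c * \<epsilon>" if "x \<notin> B" "y \<notin> B" for x y
    using B[OF that] by (simp add: entry_def norm_mult mult_left_mono)
  with \<open>bounded B\<close>
  show "\<exists>B. bounded B \<and> (\<forall>x y. x \<notin> B \<and> y \<notin> B \<longrightarrow> cmod (entry (\<lambda>f x. c * T f x) x y) \<le> cmod c * \<epsilon>)"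
    by blast
qed

lemma ghost_op_closure:
  assumes T: "bounded_op T"
    and approx: "\<And>\<epsilon>. 0 < \<epsilon> \<Longrightarrow> \<exists>S. bounded_op S \<and> ghost_op S \<and> op_norm (\<lambda>f x. T f x - S f x) < \<epsilon>"
  shows "ghost_op T"
proof (rule ghost_opI_scaled[where K=2])
  fix \<epsilon> :: real
  assume "0 < \<epsilon>"
  obtain S where S: "bounded_op S" "ghost_op S" and close: "op_norm (\<lambda>f x. T f x - S f x) < \<epsilon>"
    using approx[OF \<open>0 < \<epsilon>\<close>] by blast
  obtain B where "bounded B" and B: "\<And>x y. x \<notin> B \<Longrightarrow> y \<notin> B \<Longrightarrow> cmod (entry S x y) < \<epsilon>"
    using ghost_opD[OF S(2) \<open>0 < \<epsilon>\<close>] by blast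
  have "cmod (entry T x y) \<le> 2 * \<epsilon>" if "x \<notin> B" "y \<notin> B" for x y
  proof -
    have "entry T x y = entry (\<lambda>f x. T f x - S f x) x y + entry S x y"
      by (simp add: entry_def)
    then have "cmod (entry T x y) \<le> cmod (entry (\<lambda>f x. T f x - S f x) x y) + cmod (entry S x y)"
      by (metis norm_triangle_ineq)
    also have "\<dots> \<le> 2 * \<epsilon>"
      using norm_entry_le_op_norm[OF bounded_op_diff[OF T S(1)], of x y] close B[OF that] by simp
    finally show ?thesis .
  qed
  with \<open>bounded B\<close>
  show "\<exists>B. bounded B \<and> (\<forall>x y. x \<notin> B \<and> y \<notin> B \<longrightarrow> cmod (entry T x y) \<le> 2 * \<epsilon>)"
    by blast
qed

lemma bounded_op_apply_chi_finite:
  assumes U: "bounded_op U" and g: "g \<in> l2" and "finite C"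
  shows "U (chi C g) x = (\<Sum>z\<in>C. g z * entry U x z)"
  using \<open>finite C\<close>
proof (induction C rule: finite_induct)
  case empty
  have "chi {} g = (\<lambda>x. 0)"
    by (simp add: chi_def)
  then show ?case
    by (simp add: bounded_op_zero_apply[OF U])
next
  case (insert a C)
  have "chi (insert a C) g = (\<lambda>w. g a * delta a w + chi C g w)"
    using insert.hyps(2) by (auto simp: chi_def delta_def fun_eq_iff)
  then have "U (chi (insert a C) g) x = g a * U (delta a) x + U (chi C g) x"
    using bounded_op_add_apply[OF U l2_scale(1)[OF l2_delta] l2_chi(1)[OF g]]
      bounded_op_scale_apply[OF U l2_delta] by simp
  with insert show ?case
    by (simp add: entry_def)
qed

lemma norm_entry_comp_le:
  assumes U: "bounded_op U" and V: "bounded_op V" and "finite C"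
  shows "cmod (entry (U \<circ> V) x y)
    \<le> (\<Sum>z\<in>C. cmod (entry U x z) * cmod (entry V z y)) + cmod (U (chi (- C) (V (delta y))) x)"
proof -
  define g where "g = V (delta y)"
  have g: "g \<in> l2"
    unfolding g_def using bounded_op_in_l2[OF V l2_delta] .
  have "U g = (\<lambda>x. U (chi C g) x + U (chi (- C) g) x)"
    using bounded_op_add_apply[OF U l2_chi(1)[OF g, of C] l2_chi(1)[OF g, of "- C"]]
    unfolding chi_add_chi_compl .
  then have "entry (U \<circ> V) x y = U (chi C g) x + U (chi (- C) g) x"
    by (simp add: entry_def g_def)
  then have "entry (U \<circ> V) x y = (\<Sum>z\<in>C. g z * entry U x z) + U (chi (- C) g) x"
    unfolding bounded_op_apply_chi_finite[OF U g \<open>finite C\<close>] .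
  then have "cmod (entry (U \<circ> V) x y) \<le> cmod (\<Sum>z\<in>C. g z * entry U x z) + cmod (U (chi (- C) g) x)"
    by (simp only: norm_triangle_ineq)
  also have "\<dots> \<le> (\<Sum>z\<in>C. cmod (g z * entry U x z)) + cmod (U (chi (- C) g) x)"
    by (rule add_right_mono) (rule norm_sum)
  finally show ?thesis
    by (simp add: g_def entry_def norm_mult mult.commute)
qed

lemma sum_le_card_times_small:
  fixes f :: "'a \<Rightarrow> real"
  assumes "card C \<le> N" "\<And>z. z \<in> C \<Longrightarrow> f z \<le> M * (\<epsilon> / (real N + 1))" "0 \<le> M" "0 \<le> \<epsilon>"
  shows "sum f C \<le> M * \<epsilon>"
proof -
  have "sum f C \<le> real (card C) * (M * (\<epsilon> / (real N + 1)))"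
    using assms(2) by (rule sum_bounded_above)
  also have "\<dots> \<le> (real N + 1) * (M * (\<epsilon> / (real N + 1)))"
    using assms(1,3,4) by (intro mult_right_mono) simp_all
  also have "\<dots> = M * \<epsilon>"
    by simp
  finally show ?thesis .
qed

lemma bounded_closed_neighbourhood:
  assumes "bounded (B :: 'a::metric_space set)"
  shows "bounded {x. \<exists>b\<in>B. dist x b \<le> R}"
proof -
  obtain c e where "B \<subseteq> cball c e"
    using assms bounded_subset_cball by blast
  have "dist c x \<le> e + R" if "b \<in> B" "dist x b \<le> R" for x b
  proof -
    have "dist c b \<le> e"
      using \<open>B \<subseteq> cball c e\<close> \<open>b \<in> B\<close> by auto
    with dist_triangle[of c x b] \<open>dist x b \<le> R\<close> show ?thesis
      by (simp add: dist_commute)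
  qed
  then have "{x. \<exists>b\<in>B. dist x b \<le> R} \<subseteq> cball c (e + R)"
    by auto
  then show ?thesis
    using bounded_cball bounded_subset by blast
qed

lemma bounded_geometry_cballE:
  assumes "bounded_geometry TYPE('a::metric_space)" "0 < R"
  obtains N where "\<And>x::'a. finite (cball x R)" "\<And>x::'a. card (cball x R) \<le> N"
  using assms(1)[unfolded bounded_geometry_def, rule_format, OF assms(2)] that by blast

lemma chi_delta: "chi {y} (delta y) = delta y"
  by (auto simp: chi_def delta_def)

lemma norm_entry_comp_le_compression_left:
  assumes U: "bounded_op U" and V: "bounded_op V" and "finite C"
  shows "cmod (entry (U \<circ> V) x y)
    \<le> (\<Sum>z\<in>C. cmod (entry U x z) * cmod (entry V z y)) + op_norm (chi {x} \<circ> U \<circ> chi (- C)) * op_norm V"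
proof -
  have "cmod (U (chi (- C) (V (delta y))) x) = cmod ((chi {x} \<circ> U \<circ> chi (- C)) (V (delta y)) x)"
    by (simp add: chi_def)
  also have "\<dots> \<le> op_norm (chi {x} \<circ> U \<circ> chi (- C)) * l2_norm (V (delta y))"
    by (rule norm_apply_le[OF bounded_op_compression[OF U] bounded_op_in_l2[OF V l2_delta]])
  also have "\<dots> \<le> op_norm (chi {x} \<circ> U \<circ> chi (- C)) * op_norm V"
    using l2_norm_apply_le[OF V l2_delta] op_norm_nonneg[OF bounded_op_compression[OF U]]
    by (intro mult_left_mono) (simp_all add: l2_norm_delta)
  finally show ?thesis
    using norm_entry_comp_le[OF U V \<open>finite C\<close>, of x y] by linarith
qed

lemma norm_entry_comp_le_compression_right:
  assumes U: "bounded_op U" and V: "bounded_op V" and "finite C"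
  shows "cmod (entry (U \<circ> V) x y)
    \<le> (\<Sum>z\<in>C. cmod (entry U x z) * cmod (entry V z y)) + op_norm U * op_norm (chi (- C) \<circ> V \<circ> chi {y})"
proof -
  have "l2_norm (chi (- C) (V (delta y))) = l2_norm ((chi (- C) \<circ> V \<circ> chi {y}) (delta y))"
    by (simp add: chi_delta)
  also have "\<dots> \<le> op_norm (chi (- C) \<circ> V \<circ> chi {y})"
    by (rule op_norm_upper[OF bounded_op_compression[OF V] l2_delta]) (simp add: l2_norm_delta)
  finally have "op_norm U * l2_norm (chi (- C) (V (delta y))) \<le> op_norm U * op_norm (chi (- C) \<circ> V \<circ> chi {y})"
    by (rule mult_left_mono[OF _ op_norm_nonneg[OF U]])
  moreover have "cmod (U (chi (- C) (V (delta y))) x) \<le> op_norm U * l2_norm (chi (- C) (V (delta y)))"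
    by (rule norm_apply_le[OF U l2_chi(1)[OF bounded_op_in_l2[OF V l2_delta]]])
  ultimately show ?thesis
    using norm_entry_comp_le[OF U V \<open>finite C\<close>, of x y] by linarith
qed

lemma ghost_op_comp_left:
  assumes bg: "bounded_geometry TYPE('a::metric_space)"
    and S: "bounded_op (S :: 'a op)" "quasi_local S" and T: "bounded_op T" "ghost_op T"
  shows "ghost_op (S \<circ> T)"
proof (rule ghost_opI_scaled[where K="op_norm S + op_norm T"])
  fix \<epsilon> :: real
  assume "0 < \<epsilon>"
  obtain R where "0 < R"
    and R: "\<And>A B. \<forall>a\<in>A. \<forall>b\<in>B. R \<le> dist a b \<Longrightarrow> op_norm (chi A \<circ> S \<circ> chi B) \<le> \<epsilon>"
    using quasi_localD[OF S(2) \<open>0 < \<epsilon>\<close>] by blast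
  obtain N where fin: "\<And>x::'a. finite (cball x R)" and card: "\<And>x::'a. card (cball x R) \<le> N"
    using bounded_geometry_cballE[OF bg \<open>0 < R\<close>] by blast
  have "0 < \<epsilon> / (real N + 1)"
    using \<open>0 < \<epsilon>\<close> by simp
  then obtain B where "bounded B"
    and B: "\<And>x y. x \<notin> B \<Longrightarrow> y \<notin> B \<Longrightarrow> cmod (entry T x y) < \<epsilon> / (real N + 1)"
    using ghost_opD[OF T(2)] by blast
  define B' where "B' = {x. \<exists>b\<in>B. dist x b \<le> R}"
  have "cmod (entry (S \<circ> T) x y) \<le> (op_norm S + op_norm T) * \<epsilon>" if "x \<notin> B'" "y \<notin> B'" for x y
  proof -
    have "y \<notin> B" "\<And>z. z \<in> cball x R \<Longrightarrow> z \<notin> B"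
      using that \<open>0 < R\<close> by (auto simp: B'_def dist_commute)
    then have "cmod (entry S x z) * cmod (entry T z y) \<le> op_norm S * (\<epsilon> / (real N + 1))"
      if "z \<in> cball x R" for z
      using norm_entry_le_op_norm[OF S(1)] op_norm_nonneg[OF S(1)] B that
      by (intro mult_mono) (auto simp: less_imp_le)
    then have near: "(\<Sum>z\<in>cball x R. cmod (entry S x z) * cmod (entry T z y)) \<le> op_norm S * \<epsilon>"
      using card[of x] op_norm_nonneg[OF S(1)] \<open>0 < \<epsilon>\<close>
      by (intro sum_le_card_times_small[where N=N]) simp_all
    have away: "op_norm (chi {x} \<circ> S \<circ> chi (- cball x R)) \<le> \<epsilon>"
      by (rule R) simp
    have "cmod (entry (S \<circ> T) x y) \<le> op_norm S * \<epsilon> + \<epsilon> * op_norm T"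
      using norm_entry_comp_le_compression_left[OF S(1) T(1) fin[of x], where x=x and y=y] near
        mult_right_mono[OF away op_norm_nonneg[OF T(1)]]
      by linarith
    then show ?thesis
      by (simp add: algebra_simps)
  qed
  moreover have "bounded B'"
    unfolding B'_def by (rule bounded_closed_neighbourhood[OF \<open>bounded B\<close>])
  ultimately show "\<exists>B. bounded B \<and>
      (\<forall>x y. x \<notin> B \<and> y \<notin> B \<longrightarrow> cmod (entry (S \<circ> T) x y) \<le> (op_norm S + op_norm T) * \<epsilon>)"
    by blast
qed

lemma ghost_op_comp_right:
  assumes bg: "bounded_geometry TYPE('a::metric_space)"
    and S: "bounded_op (S :: 'a op)" "quasi_local S" and T: "bounded_op T" "ghost_op T"
  shows "ghost_op (T \<circ> S)"
proof (rule ghost_opI_scaled[where K="op_norm S + op_norm T"])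
  fix \<epsilon> :: real
  assume "0 < \<epsilon>"
  obtain R where "0 < R"
    and R: "\<And>A B. \<forall>a\<in>A. \<forall>b\<in>B. R \<le> dist a b \<Longrightarrow> op_norm (chi A \<circ> S \<circ> chi B) \<le> \<epsilon>"
    using quasi_localD[OF S(2) \<open>0 < \<epsilon>\<close>] by blast
  obtain N where fin: "\<And>x::'a. finite (cball x R)" and card: "\<And>x::'a. card (cball x R) \<le> N"
    using bounded_geometry_cballE[OF bg \<open>0 < R\<close>] by blast
  have "0 < \<epsilon> / (real N + 1)"
    using \<open>0 < \<epsilon>\<close> by simp
  then obtain B where "bounded B"
    and B: "\<And>x y. x \<notin> B \<Longrightarrow> y \<notin> B \<Longrightarrow> cmod (entry T x y) < \<epsilon> / (real N + 1)"
    using ghost_opD[OF T(2)] by blast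
  define B' where "B' = {x. \<exists>b\<in>B. dist x b \<le> R}"
  have "cmod (entry (T \<circ> S) x y) \<le> (op_norm S + op_norm T) * \<epsilon>" if "x \<notin> B'" "y \<notin> B'" for x y
  proof -
    have "x \<notin> B" "\<And>z. z \<in> cball y R \<Longrightarrow> z \<notin> B"
      using that \<open>0 < R\<close> by (auto simp: B'_def dist_commute)
    then have "cmod (entry T x z) * cmod (entry S z y) \<le> op_norm S * (\<epsilon> / (real N + 1))"
      if "z \<in> cball y R" for z
      using norm_entry_le_op_norm[OF S(1)] op_norm_nonneg[OF S(1)] B that
      by (subst mult.commute, intro mult_mono) (auto simp: less_imp_le)
    then have near: "(\<Sum>z\<in>cball y R. cmod (entry T x z) * cmod (entry S z y)) \<le> op_norm S * \<epsilon>"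
      using card[of y] op_norm_nonneg[OF S(1)] \<open>0 < \<epsilon>\<close>
      by (intro sum_le_card_times_small[where N=N]) simp_all
    have away: "op_norm (chi (- cball y R) \<circ> S \<circ> chi {y}) \<le> \<epsilon>"
      by (rule R) (simp add: dist_commute)
    have "cmod (entry (T \<circ> S) x y) \<le> op_norm S * \<epsilon> + op_norm T * \<epsilon>"
      using norm_entry_comp_le_compression_right[OF T(1) S(1) fin[of y], where x=x and y=y] near
        mult_left_mono[OF away op_norm_nonneg[OF T(1)]]
      by linarith
    then show ?thesis
      by (simp add: algebra_simps)
  qed
  moreover have "bounded B'"
    unfolding B'_def by (rule bounded_closed_neighbourhood[OF \<open>bounded B\<close>])
  ultimately show "\<exists>B. bounded B \<and>
      (\<forall>x y. x \<notin> B \<and> y \<notin> B \<longrightarrow> cmod (entry (T \<circ> S) x y) \<le> (op_norm S + op_norm T) * \<epsilon>)"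
    by blast
qed

section \<open>The ghost ideal\<close>

lemma mem_C_uq_iff: "T \<in> C_uq \<longleftrightarrow> bounded_op T \<and> quasi_local T"
  by (simp add: C_uq_def)

lemma mem_ghost_ideal_iff: "T \<in> ghost_ideal \<longleftrightarrow> bounded_op T \<and> quasi_local T \<and> ghost_op T"
  by (simp add: ghost_ideal_def C_uq_def)

lemma zero_in_ghost_ideal: "(\<lambda>f x. 0) \<in> ghost_ideal"
  unfolding mem_ghost_ideal_iff using bounded_op_zero quasi_local_zero ghost_op_zero by blast

lemma ghost_ideal_add:
  assumes "S \<in> ghost_ideal" "T \<in> ghost_ideal"
  shows "(\<lambda>f x. S f x + T f x) \<in> ghost_ideal"
proof -
  from assms have S: "bounded_op S" "quasi_local S" "ghost_op S"
    and T: "bounded_op T" "quasi_local T" "ghost_op T"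
    by (simp_all add: mem_ghost_ideal_iff)
  show ?thesis
    unfolding mem_ghost_ideal_iff
    using bounded_op_add(1)[OF S(1) T(1)] quasi_local_add[OF S(1,2) T(1,2)] ghost_op_add[OF S(3) T(3)]
    by blast
qed

lemma ghost_ideal_scale:
  assumes "T \<in> ghost_ideal"
  shows "(\<lambda>f x. c * T f x) \<in> ghost_ideal"
proof -
  from assms have T: "bounded_op T" "quasi_local T" "ghost_op T"
    by (simp_all add: mem_ghost_ideal_iff)
  show ?thesis
    unfolding mem_ghost_ideal_iff
    using bounded_op_scale(1)[OF T(1)] quasi_local_scale[OF T(1,2)] ghost_op_scale[OF T(3)]
    by blast
qed

lemma ghost_ideal_comp:
  assumes bg: "bounded_geometry TYPE('a::metric_space)"
    and "(T :: 'a op) \<in> ghost_ideal" "S \<in> C_uq"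
  shows "S \<circ> T \<in> ghost_ideal" and "T \<circ> S \<in> ghost_ideal"
proof -
  from assms(2,3) have T: "bounded_op T" "quasi_local T" "ghost_op T"
    and S: "bounded_op S" "quasi_local S"
    by (simp_all add: mem_ghost_ideal_iff mem_C_uq_iff)
  show "S \<circ> T \<in> ghost_ideal"
    unfolding mem_ghost_ideal_iff
    using bounded_op_comp(1)[OF S(1) T(1)] quasi_local_comp[OF S T(1,2)] ghost_op_comp_left[OF bg S T(1,3)]
    by blast
  show "T \<circ> S \<in> ghost_ideal"
    unfolding mem_ghost_ideal_iff
    using bounded_op_comp(1)[OF T(1) S(1)] quasi_local_comp[OF T(1,2) S] ghost_op_comp_right[OF bg S T(1,3)]
    by blast
qed

lemma ghost_ideal_closed:
  assumes "T \<in> C_uq"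
    and approx: "\<forall>\<epsilon>>0. \<exists>S\<in>ghost_ideal. op_norm (\<lambda>f x. T f x - S f x) < \<epsilon>"
  shows "T \<in> ghost_ideal"
proof -
  have "\<exists>S. bounded_op S \<and> ghost_op S \<and> op_norm (\<lambda>f x. T f x - S f x) < \<epsilon>"
    if "0 < \<epsilon>" for \<epsilon>
  proof -
    obtain S where "S \<in> ghost_ideal" "op_norm (\<lambda>f x. T f x - S f x) < \<epsilon>"
      using approx \<open>0 < \<epsilon>\<close> by blast
    then show ?thesis
      by (auto simp: mem_ghost_ideal_iff)
  qed
  with assms(1) have "ghost_op T"
    by (intro ghost_op_closure) (simp_all add: mem_C_uq_iff)
  with assms(1) show ?thesis
    by (simp add: mem_ghost_ideal_iff mem_C_uq_iff)
qed

theorem lemma5p4: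
  assumes "bounded_geometry TYPE('a::metric_space)"
  shows "(ghost_ideal :: 'a op set) \<subseteq> C_uq
    \<and> (\<lambda>f x. 0) \<in> (ghost_ideal :: 'a op set)
    \<and> (\<forall>S\<in>(ghost_ideal :: 'a op set). \<forall>T\<in>ghost_ideal.
          (\<lambda>f x. S f x + T f x) \<in> ghost_ideal)
    \<and> (\<forall>T\<in>(ghost_ideal :: 'a op set). \<forall>c::complex.
          (\<lambda>f x. c * T f x) \<in> ghost_ideal)
    \<and> (\<forall>T\<in>(ghost_ideal :: 'a op set). \<forall>S\<in>C_uq.
          S \<circ> T \<in> ghost_ideal \<and> T \<circ> S \<in> ghost_ideal)
    \<and> (\<forall>T\<in>(C_uq :: 'a op set).
          (\<forall>\<epsilon>>0. \<exists>S\<in>ghost_ideal. op_norm (\<lambda>f x. T f x - S f x) < \<epsilon>)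
          \<longrightarrow> T \<in> ghost_ideal)"
proof (intro conjI ballI allI impI)
  show "(ghost_ideal :: 'a op set) \<subseteq> C_uq"
    by (auto simp: ghost_ideal_def)
  show "(\<lambda>f x. 0) \<in> (ghost_ideal :: 'a op set)"
    by (rule zero_in_ghost_ideal)
  show "(\<lambda>f x. S f x + T f x) \<in> ghost_ideal" if "S \<in> ghost_ideal" "T \<in> ghost_ideal" for S T :: "'a op"
    using that by (rule ghost_ideal_add)
  show "(\<lambda>f x. c * T f x) \<in> ghost_ideal" if "T \<in> ghost_ideal" for T :: "'a op" and c
    using that by (rule ghost_ideal_scale)
  show "S \<circ> T \<in> ghost_ideal" "T \<circ> S \<in> ghost_ideal" if "T \<in> ghost_ideal" "S \<in> C_uq" for S T :: "'a op"
    using ghost_ideal_comp[OF assms that] by auto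
  show "T \<in> ghost_ideal"
    if "T \<in> C_uq" "\<forall>\<epsilon>>0. \<exists>S\<in>ghost_ideal. op_norm (\<lambda>f x. T f x - S f x) < \<epsilon>" for T :: "'a op"
    using that by (rule ghost_ideal_closed)
qed

end
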